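(* Let $\tilde{\boldsymbol{\gamma}}\ge0$ be a downlink SINR vector such that $\mathbf{I}-\tilde{\mathbf{F}}(\tilde{\boldsymbol{\gamma}})$ and $\mathbf{I}-\tilde{\mathbf{H}}(\tilde{\boldsymbol{\gamma}})$ are invertible, and let $\tilde{\mathbf{p}}(\tilde{\boldsymbol{\gamma}})=(\mathbf{I}-\tilde{\mathbf{F}}(\tilde{\boldsymbol{\gamma}}))^{-1}\tilde{\mathbf{U}}(\tilde{\boldsymbol{\gamma}})$. Then $\tilde{\boldsymbol{\gamma}}$ is feasible, i.e. $\tilde p_i(\tilde{\boldsymbol{\gamma}})\ge0$ for all $i\in\mathcal{M}$ and $\sum_{i\in\mathcal{M}^{\mathcal{B}}_m}\tilde p_i(\tilde{\boldsymbol{\gamma}})\le\tilde P^{\max}_m$ for all $m\in\mathcal{B}$, if and only if $$0\le \tilde P_m(\tilde{\boldsymbol{\gamma}})\le \tilde P^{\max}_m\quad\text{for all } m\in\mathcal{B},$$ where $\tilde{\mathbf{P}}(\tilde{\boldsymbol{\gamma}})=(\mathbf{I}-\tilde{\mathbf{H}}(\tilde{\boldsymbol{\gamma}}))^{-1}\tilde{\mathbf{N}}^*$.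
   Context: Downlink cellular model: users $\mathcal{M}=\{1,\dots,M\}$, BSs $\mathcal{B}=\{1,\dots,B\}$; user $i$ served by BS $b_i$, $\mathcal{M}^{\mathcal{B}}_m=\{i:b_i=m\}$. Downlink gains $\tilde h_{i,m}>0$ (BS $m$ to user $i$), noises $\tilde N_i>0$, BS power budgets $\tilde P^{\max}_m>0$. $\tilde U_i=\tilde\gamma_i\tilde N_i/\tilde h_{i,b_i}$; $\tilde F_{ii}=0$, $\tilde F_{ij}=\tilde\gamma_i\tilde h_{i,b_j}/\tilde h_{i,b_i}$ ($i\ne j$), so $\tilde{\mathbf{p}}(\tilde{\boldsymbol{\gamma}})$ is the power vector achieving downlink SINRs $\tilde\gamma_i(\tilde{\mathbf p})=\frac{\tilde h_{i,b_i}\tilde p_i}{\sum_{j\ne i}\tilde h_{i,b_j}\tilde p_j+\tilde N_i}=\tilde\gamma_i$. With $\tilde\theta_i=\tilde\gamma_i/(\tilde\gamma_i+1)$: $\tilde H_{mm}=\sum_{i\in\mathcal{M}^{\mathcal{B}}_m}\tilde\theta_i$, $\tilde H_{mn}=\sum_{i\in\mathcal{M}^{\mathcal{B}}_m}\frac{\tilde h_{i,n}}{\tilde h_{i,m}}\tilde\theta_i$ for $m\ne n$, and $\tilde N^*_m=\sum_{i\in\mathcal{M}^{\mathcal{B}}_m}\tilde\theta_i\tilde N_i/\tilde h_{i,m}$. *)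

theory Defs
  imports "HOL-Analysis.Analysis"
begin

text \<open>Users are indexed by a finite type 'm, base stations by a finite type 'b.
  bs i is the serving BS b_i, h i m the downlink gain from BS m to user i,
  N i the noise of user i, Pmax m the power budget of BS m.\<close>

definition dl_U :: "('m::finite \<Rightarrow> 'b) \<Rightarrow> ('m \<Rightarrow> 'b \<Rightarrow> real) \<Rightarrow> ('m \<Rightarrow> real) \<Rightarrow> real^'m \<Rightarrow> real^'m" where
  "dl_U bs h N g = (\<chi> i. g$i * N i / h i (bs i))"

definition dl_F :: "('m::finite \<Rightarrow> 'b) \<Rightarrow> ('m \<Rightarrow> 'b \<Rightarrow> real) \<Rightarrow> real^'m \<Rightarrow> real^'m^'m" where
  "dl_F bs h g = (\<chi> i j. if i = j then 0 else g$i * h i (bs j) / h i (bs i))"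

definition dl_theta :: "real^'m::finite \<Rightarrow> 'm \<Rightarrow> real" where
  "dl_theta g i = g$i / (g$i + 1)"

definition dl_H :: "('m::finite \<Rightarrow> 'b::finite) \<Rightarrow> ('m \<Rightarrow> 'b \<Rightarrow> real) \<Rightarrow> real^'m \<Rightarrow> real^'b^'b" where
  "dl_H bs h g = (\<chi> m n. if m = n then (\<Sum>i\<in>{i. bs i = m}. dl_theta g i)
                        else (\<Sum>i\<in>{i. bs i = m}. h i n / h i m * dl_theta g i))"

definition dl_Nstar :: "('m::finite \<Rightarrow> 'b::finite) \<Rightarrow> ('m \<Rightarrow> 'b \<Rightarrow> real) \<Rightarrow> ('m \<Rightarrow> real) \<Rightarrow> real^'m \<Rightarrow> real^'b" where
  "dl_Nstar bs h N g = (\<chi> m. \<Sum>i\<in>{i. bs i = m}. dl_theta g i * N i / h i m)"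

definition dl_p :: "('m::finite \<Rightarrow> 'b) \<Rightarrow> ('m \<Rightarrow> 'b \<Rightarrow> real) \<Rightarrow> ('m \<Rightarrow> real) \<Rightarrow> real^'m \<Rightarrow> real^'m" where
  "dl_p bs h N g = matrix_inv (mat 1 - dl_F bs h g) *v dl_U bs h N g"

definition dl_P :: "('m::finite \<Rightarrow> 'b::finite) \<Rightarrow> ('m \<Rightarrow> 'b \<Rightarrow> real) \<Rightarrow> ('m \<Rightarrow> real) \<Rightarrow> real^'m \<Rightarrow> real^'b" where
  "dl_P bs h N g = matrix_inv (mat 1 - dl_H bs h g) *v dl_Nstar bs h N g"

definition dl_feasible :: "('m::finite \<Rightarrow> 'b::finite) \<Rightarrow> ('m \<Rightarrow> 'b \<Rightarrow> real) \<Rightarrow> ('m \<Rightarrow> real) \<Rightarrow> ('b \<Rightarrow> real) \<Rightarrow> real^'m \<Rightarrow> bool" where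
  "dl_feasible bs h N Pmax g \<longleftrightarrow>
     (\<forall>i. 0 \<le> dl_p bs h N g $ i) \<and>
     (\<forall>m. (\<Sum>i\<in>{i. bs i = m}. dl_p bs h N g $ i) \<le> Pmax m)"

end

theory Submission
  imports Defs
begin

text \<open>Write \<open>Q m\<close> for the total transmit power of BS \<open>m\<close> and \<open>T i = \<Sum>j. h i (b j) * p j
  = \<Sum>n. h i n * Q n\<close> for the total power received by user \<open>i\<close>. Solving the SINR equation of
  user \<open>i\<close> for its own power gives \<open>p i = \<theta> i * (T i + N i) / h i (b i)\<close>; summing this over
  the users of BS \<open>m\<close> yields \<open>(I - H) Q = N*\<close>, hence \<open>P = Q\<close>. So \<open>p \<ge> 0\<close> gives \<open>P \<ge> 0\<close>,
  conversely \<open>P \<ge> 0\<close> gives \<open>T \<ge> 0\<close> and then \<open>p \<ge> 0\<close>, and the budget constraints are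
  literally \<open>P m \<le> Pmax m\<close>.\<close>

lemma invertible_matrix_inv:
  fixes A :: "'a::semiring_1^'n^'n"
  assumes "invertible A"
  shows "A ** matrix_inv A = mat 1 \<and> matrix_inv A ** A = mat 1"
  using assms unfolding invertible_def matrix_inv_def by (rule someI_ex)

lemma matrix_inv_mult_vector_eq_iff:
  fixes A :: "'a::comm_semiring_1^'n::finite^'n"
  assumes "invertible A"
  shows "matrix_inv A *v b = x \<longleftrightarrow> A *v x = b"
  using invertible_matrix_inv[OF assms]
  by (metis matrix_vector_mul_assoc matrix_vector_mul_lid)

definition bs_load :: "('m::finite \<Rightarrow> 'b) \<Rightarrow> real^'m \<Rightarrow> real^'b" where
  "bs_load bs p = (\<chi> n. \<Sum>i\<in>{i. bs i = n}. p $ i)"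

definition rx_power :: "('m::finite \<Rightarrow> 'b) \<Rightarrow> ('m \<Rightarrow> 'b \<Rightarrow> real) \<Rightarrow> real^'m \<Rightarrow> 'm \<Rightarrow> real" where
  "rx_power bs h p i = (\<Sum>j\<in>UNIV. h i (bs j) * p $ j)"

lemma rx_power_bs_load:
  fixes bs :: "'m::finite \<Rightarrow> 'b::finite"
  shows "rx_power bs h p i = (\<Sum>n\<in>UNIV. h i n * bs_load bs p $ n)"
proof -
  have "rx_power bs h p i = (\<Sum>n\<in>UNIV. \<Sum>j\<in>{j. j \<in> UNIV \<and> bs j = n}. h i (bs j) * p $ j)"
    unfolding rx_power_def by (rule sum.group[symmetric]) auto
  then show ?thesis
    by (simp add: bs_load_def sum_distrib_left)
qed

lemma dl_F_mult_vector:
  "(dl_F bs h g *v p) $ i = g $ i / h i (bs i) * (rx_power bs h p i - h i (bs i) * p $ i)"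
proof -
  have "(dl_F bs h g *v p) $ i
      = (\<Sum>j\<in>UNIV. g $ i / h i (bs i) * (h i (bs j) * p $ j))
        - (\<Sum>j\<in>UNIV. if i = j then g $ i / h i (bs i) * (h i (bs j) * p $ j) else 0)"
    by (subst sum_subtractf[symmetric])
      (auto simp: matrix_vector_mult_def dl_F_def intro!: sum.cong)
  then show ?thesis
    by (simp add: rx_power_def sum_distrib_left right_diff_distrib)
qed

lemma dl_sinr_equation_iff:
  assumes "h i (bs i) > 0" and "g $ i \<ge> 0"
  shows "((mat 1 - dl_F bs h g) *v p) $ i = dl_U bs h N g $ i \<longleftrightarrow>
         p $ i = dl_theta g i * (rx_power bs h p i + N i) / h i (bs i)"
proof -
  have pos: "h i (bs i) * (g $ i + 1) > 0"
    using assms by simp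
  have "((mat 1 - dl_F bs h g) *v p) $ i = dl_U bs h N g $ i \<longleftrightarrow>
        p $ i * (h i (bs i) * (g $ i + 1)) = g $ i * (rx_power bs h p i + N i)"
    using assms(1)
    by (simp add: matrix_vector_mult_diff_rdistrib dl_F_mult_vector dl_U_def field_simps)
  also have "\<dots> \<longleftrightarrow> p $ i = g $ i * (rx_power bs h p i + N i) / (h i (bs i) * (g $ i + 1))"
    using pos by (auto simp: eq_divide_eq)
  finally show ?thesis
    by (simp add: dl_theta_def mult.commute)
qed

lemma dl_H_mult_vector:
  assumes "\<And>i. h i m > 0"
  shows "(dl_H bs h g *v q) $ m
       = (\<Sum>i\<in>{i. bs i = m}. dl_theta g i * (\<Sum>n\<in>UNIV. h i n * q $ n) / h i m)"
proof -
  have "(dl_H bs h g *v q) $ m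
      = (\<Sum>n\<in>UNIV. \<Sum>i\<in>{i. bs i = m}. h i n / h i m * dl_theta g i * q $ n)"
    unfolding matrix_vector_mult_def
    using assms by (auto simp: dl_H_def sum_distrib_right less_imp_neq[THEN not_sym]
        intro!: sum.cong)
  also have "\<dots> = (\<Sum>i\<in>{i. bs i = m}. \<Sum>n\<in>UNIV. h i n / h i m * dl_theta g i * q $ n)"
    by (rule sum.swap)
  finally show ?thesis
    by (simp add: sum_distrib_left sum_divide_distrib mult_ac)
qed

lemma dl_H_bs_load:
  fixes bs :: "'m::finite \<Rightarrow> 'b::finite"
  assumes h_pos: "\<And>i m. h i m > 0"
    and p: "\<And>i. p $ i = dl_theta g i * (rx_power bs h p i + N i) / h i (bs i)"
  shows "(mat 1 - dl_H bs h g) *v bs_load bs p = dl_Nstar bs h N g"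
proof (rule vec_eq_iff[THEN iffD2, rule_format])
  fix m
  have "bs_load bs p $ m = (\<Sum>i\<in>{i. bs i = m}. dl_theta g i * (rx_power bs h p i + N i) / h i m)"
    unfolding bs_load_def by (auto simp: p[symmetric] intro: sum.cong)
  then show "((mat 1 - dl_H bs h g) *v bs_load bs p) $ m = dl_Nstar bs h N g $ m"
    by (simp add: matrix_vector_mult_diff_rdistrib dl_H_mult_vector[OF h_pos]
        rx_power_bs_load[symmetric] dl_Nstar_def sum_subtractf[symmetric]
        distrib_left add_divide_distrib)
qed

lemma dl_p_nth:
  assumes h_pos: "\<And>i m. h i m > 0"
    and g_nonneg: "\<And>i. g $ i \<ge> 0"
    and invF: "invertible (mat 1 - dl_F bs h g)"
  shows "dl_p bs h N g $ i
       = dl_theta g i * (rx_power bs h (dl_p bs h N g) i + N i) / h i (bs i)"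
proof -
  have "(mat 1 - dl_F bs h g) *v dl_p bs h N g = dl_U bs h N g"
    unfolding dl_p_def using matrix_inv_mult_vector_eq_iff[OF invF] by blast
  then show ?thesis
    using dl_sinr_equation_iff[of h i bs g "dl_p bs h N g" N] h_pos g_nonneg by simp
qed

lemma dl_P_eq_bs_load_dl_p:
  fixes bs :: "'m::finite \<Rightarrow> 'b::finite"
  assumes h_pos: "\<And>i m. h i m > 0"
    and g_nonneg: "\<And>i. g $ i \<ge> 0"
    and invF: "invertible (mat 1 - dl_F bs h g)"
    and invH: "invertible (mat 1 - dl_H bs h g)"
  shows "dl_P bs h N g = bs_load bs (dl_p bs h N g)"
  unfolding dl_P_def matrix_inv_mult_vector_eq_iff[OF invH]
  using dl_H_bs_load[OF h_pos dl_p_nth[OF h_pos g_nonneg invF]] .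

lemma nonneg_if_bs_load_nonneg:
  fixes bs :: "'m::finite \<Rightarrow> 'b::finite"
  assumes h_pos: "\<And>i m. h i m > 0"
    and g_nonneg: "\<And>i. g $ i \<ge> 0"
    and N_nonneg: "\<And>i. N i \<ge> 0"
    and p: "\<And>i. p $ i = dl_theta g i * (rx_power bs h p i + N i) / h i (bs i)"
    and load_nonneg: "\<And>m. bs_load bs p $ m \<ge> 0"
  shows "p $ i \<ge> 0"
proof -
  have "rx_power bs h p i \<ge> 0"
    unfolding rx_power_bs_load using h_pos load_nonneg
    by (intro sum_nonneg mult_nonneg_nonneg) (auto intro: less_imp_le)
  moreover have "dl_theta g i \<ge> 0"
    unfolding dl_theta_def using g_nonneg[of i] by simp
  ultimately show ?thesis
    unfolding p[of i] using N_nonneg[of i] h_pos[of i "bs i"] by simp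
qed

theorem corollary2:
  fixes bs :: "'m::finite \<Rightarrow> 'b::finite"
    and h :: "'m \<Rightarrow> 'b \<Rightarrow> real"
    and N :: "'m \<Rightarrow> real"
    and Pmax :: "'b \<Rightarrow> real"
    and g :: "real^'m"
  assumes h_pos: "\<And>i m. h i m > 0"
    and N_pos: "\<And>i. N i > 0"
    and Pmax_pos: "\<And>m. Pmax m > 0"
    and g_nonneg: "\<And>i. g$i \<ge> 0"
    and invF: "invertible (mat 1 - dl_F bs h g)"
    and invH: "invertible (mat 1 - dl_H bs h g)"
  shows "dl_feasible bs h N Pmax g \<longleftrightarrow>
         (\<forall>m. 0 \<le> dl_P bs h N g $ m \<and> dl_P bs h N g $ m \<le> Pmax m)"
proof -
  let ?p = "dl_p bs h N g"
  have P: "dl_P bs h N g = bs_load bs ?p"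
    by (rule dl_P_eq_bs_load_dl_p[OF h_pos g_nonneg invF invH])
  have "(\<forall>i. 0 \<le> ?p $ i) \<longleftrightarrow> (\<forall>m. 0 \<le> bs_load bs ?p $ m)"
  proof
    assume "\<forall>i. 0 \<le> ?p $ i"
    then show "\<forall>m. 0 \<le> bs_load bs ?p $ m"
      by (simp add: bs_load_def sum_nonneg)
  next
    assume "\<forall>m. 0 \<le> bs_load bs ?p $ m"
    then show "\<forall>i. 0 \<le> ?p $ i"
      using nonneg_if_bs_load_nonneg[OF h_pos g_nonneg _ dl_p_nth[OF h_pos g_nonneg invF]]
        N_pos by (simp add: less_imp_le)
  qed
  then show ?thesis
    unfolding dl_feasible_def P by (auto simp: bs_load_def)
qed

end
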